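(* Let $G$ be a finite Weetman graph and let $v_0\in V(G)$. Then the cluster graph $\mathcal{C}(G)$ of $G$ with respect to $v_0$ is a tree.
   Context: All graphs are simple and connected; $d$ is graph distance and $\mathrm{pred}_{v_0}(v)=\{u : uv\in E(G),\ d(v_0,u)=d(v_0,v)-1\}$. $G$ is Weetman if for every vertex $v_0$: (Triangle Condition) for every two adjacent vertices $v,v'$ with $d(v_0,v)=d(v_0,v')=k$, there is $u$ with $d(v_0,u)=k-1$ and $uv,uv'\in E(G)$; (Interval Condition) for every vertex $v$, the subgraph induced by $\mathrm{pred}_{v_0}(v)$ is connected. For $i\ge0$ let $S^i=\{v: d(v_0,v)=i\}$. The clusters with respect to $v_0$ are the vertex sets of the connected components of the induced subgraphs $G[S^i]$, $i\ge 0$. The cluster graph $\mathcal{C}(G)$ has the clusters as vertices, two distinct clusters $C,C'$ being adjacent iff some $v\in C$, $v'\in C'$ satisfy $vv'\in E(G)$. *)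

theory Defs
  imports Main
begin

definition simple_graph :: "'a set \<Rightarrow> ('a \<Rightarrow> 'a \<Rightarrow> bool) \<Rightarrow> bool" where
  "simple_graph V E \<longleftrightarrow>
     (\<forall>u v. E u v \<longrightarrow> u \<in> V \<and> v \<in> V) \<and>
     (\<forall>u v. E u v \<longrightarrow> E v u) \<and> (\<forall>v. \<not> E v v)"

definition is_walk :: "('a \<Rightarrow> 'a \<Rightarrow> bool) \<Rightarrow> 'a list \<Rightarrow> bool" where
  "is_walk E xs \<longleftrightarrow> xs \<noteq> [] \<and> (\<forall>i. Suc i < length xs \<longrightarrow> E (xs ! i) (xs ! Suc i))"

definition reach_in :: "('a \<Rightarrow> 'a \<Rightarrow> bool) \<Rightarrow> 'a set \<Rightarrow> 'a \<Rightarrow> 'a \<Rightarrow> bool" where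
  "reach_in E S u v \<longleftrightarrow>
     (\<exists>xs. is_walk E xs \<and> set xs \<subseteq> S \<and> hd xs = u \<and> last xs = v)"

(* the induced subgraph G[S] is connected (vacuously true for S = {}) *)
definition connected_on :: "('a \<Rightarrow> 'a \<Rightarrow> bool) \<Rightarrow> 'a set \<Rightarrow> bool" where
  "connected_on E S \<longleftrightarrow> (\<forall>u\<in>S. \<forall>v\<in>S. reach_in E S u v)"

definition connected_graph :: "'a set \<Rightarrow> ('a \<Rightarrow> 'a \<Rightarrow> bool) \<Rightarrow> bool" where
  "connected_graph V E \<longleftrightarrow> V \<noteq> {} \<and> connected_on E V"

definition gdist :: "'a set \<Rightarrow> ('a \<Rightarrow> 'a \<Rightarrow> bool) \<Rightarrow> 'a \<Rightarrow> 'a \<Rightarrow> nat" where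
  "gdist V E u v = (LEAST n. \<exists>xs. is_walk E xs \<and> set xs \<subseteq> V \<and> hd xs = u \<and> last xs = v
                                   \<and> length xs = Suc n)"

definition pred_set :: "'a set \<Rightarrow> ('a \<Rightarrow> 'a \<Rightarrow> bool) \<Rightarrow> 'a \<Rightarrow> 'a \<Rightarrow> 'a set" where
  "pred_set V E v0 v = {u \<in> V. E u v \<and> gdist V E v0 u + 1 = gdist V E v0 v}"

definition triangle_condition :: "'a set \<Rightarrow> ('a \<Rightarrow> 'a \<Rightarrow> bool) \<Rightarrow> 'a \<Rightarrow> bool" where
  "triangle_condition V E v0 \<longleftrightarrow>
     (\<forall>v\<in>V. \<forall>v'\<in>V. E v v' \<and> gdist V E v0 v = gdist V E v0 v' \<longrightarrow>
        (\<exists>u\<in>V. gdist V E v0 u + 1 = gdist V E v0 v \<and> E u v \<and> E u v'))"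

definition interval_condition :: "'a set \<Rightarrow> ('a \<Rightarrow> 'a \<Rightarrow> bool) \<Rightarrow> 'a \<Rightarrow> bool" where
  "interval_condition V E v0 \<longleftrightarrow> (\<forall>v\<in>V. connected_on E (pred_set V E v0 v))"

definition weetman :: "'a set \<Rightarrow> ('a \<Rightarrow> 'a \<Rightarrow> bool) \<Rightarrow> bool" where
  "weetman V E \<longleftrightarrow> (\<forall>v0\<in>V. triangle_condition V E v0 \<and> interval_condition V E v0)"

definition sphere :: "'a set \<Rightarrow> ('a \<Rightarrow> 'a \<Rightarrow> bool) \<Rightarrow> 'a \<Rightarrow> nat \<Rightarrow> 'a set" where
  "sphere V E v0 i = {v \<in> V. gdist V E v0 v = i}"

definition components_of :: "('a \<Rightarrow> 'a \<Rightarrow> bool) \<Rightarrow> 'a set \<Rightarrow> 'a set set" where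
  "components_of E S = {{w \<in> S. reach_in E S x w} | x. x \<in> S}"

definition clusters :: "'a set \<Rightarrow> ('a \<Rightarrow> 'a \<Rightarrow> bool) \<Rightarrow> 'a \<Rightarrow> 'a set set" where
  "clusters V E v0 = (\<Union>i. components_of E (sphere V E v0 i))"

definition cluster_adj :: "('a \<Rightarrow> 'a \<Rightarrow> bool) \<Rightarrow> 'a set \<Rightarrow> 'a set \<Rightarrow> bool" where
  "cluster_adj E C C' \<longleftrightarrow> C \<noteq> C' \<and> (\<exists>v\<in>C. \<exists>v'\<in>C'. E v v')"

definition has_cycle :: "'b set \<Rightarrow> ('b \<Rightarrow> 'b \<Rightarrow> bool) \<Rightarrow> bool" where
  "has_cycle V E \<longleftrightarrow> (\<exists>xs. length xs \<ge> 3 \<and> distinct xs \<and> set xs \<subseteq> V \<and> is_walk E xs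
                           \<and> E (last xs) (hd xs))"

definition is_tree :: "'b set \<Rightarrow> ('b \<Rightarrow> 'b \<Rightarrow> bool) \<Rightarrow> bool" where
  "is_tree V E \<longleftrightarrow> connected_graph V E \<and> \<not> has_cycle V E"

end

theory Submission
  imports Defs
begin

text \<open>
  Give every cluster the distance of its vertices from \<open>v\<^sub>0\<close>. Adjacent clusters lie on
  consecutive spheres, and every vertex other than \<open>v\<^sub>0\<close> has a predecessor, so every cluster is
  joined to the cluster of \<open>v\<^sub>0\<close> and the cluster graph is connected. The Weetman conditions make
  the lower neighbour of a cluster unique: by the interval condition the predecessors of one vertex
  lie in one cluster, and by the triangle condition two adjacent vertices of a sphere share a
  predecessor, so along a path inside a cluster all predecessors stay in a single cluster. A cycle
  of clusters is then impossible, since a cluster of maximal level on it would have two distinct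
  lower neighbours.
\<close>

lemma is_walk_snoc:
  "is_walk E (xs @ [y]) \<longleftrightarrow> xs = [] \<or> is_walk E xs \<and> E (last xs) y"
proof (cases xs rule: rev_cases)
  case (snoc ys x)
  have "(\<forall>i. Suc i < Suc (length xs) \<longrightarrow> E ((xs @ [y]) ! i) ((xs @ [y]) ! Suc i)) \<longleftrightarrow>
        (\<forall>i. Suc i < length xs \<longrightarrow> E (xs ! i) (xs ! Suc i)) \<and> E (last xs) y"
    using snoc by (auto simp: nth_append less_Suc_eq last_conv_nth)
  then show ?thesis using snoc by (simp add: is_walk_def)
qed (simp add: is_walk_def)

abbreviation induced :: "('a \<Rightarrow> 'a \<Rightarrow> bool) \<Rightarrow> 'a set \<Rightarrow> 'a \<Rightarrow> 'a \<Rightarrow> bool" where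
  "induced E S \<equiv> \<lambda>a b. E a b \<and> a \<in> S \<and> b \<in> S"

lemma reach_in_iff_rtranclp: "reach_in E S u v \<longleftrightarrow> u \<in> S \<and> (induced E S)\<^sup>*\<^sup>* u v"
proof
  assume "reach_in E S u v"
  then obtain xs where xs: "is_walk E xs" "set xs \<subseteq> S" "hd xs = u" "last xs = v"
    unfolding reach_in_def by blast
  have "(induced E S)\<^sup>*\<^sup>* (hd xs) (last xs)"
    using xs(1,2)
  proof (induction xs rule: rev_induct)
    case (snoc y ys)
    then show ?case
      by (cases "ys = []") (auto simp: is_walk_snoc intro: rtranclp.rtrancl_into_rtrancl dest: last_in_set)
  qed (simp add: is_walk_def)
  moreover have "u \<in> S" using xs by (metis hd_in_set is_walk_def subsetD)
  ultimately show "u \<in> S \<and> (induced E S)\<^sup>*\<^sup>* u v" using xs by simp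
next
  assume "u \<in> S \<and> (induced E S)\<^sup>*\<^sup>* u v"
  then have u: "u \<in> S" and "(induced E S)\<^sup>*\<^sup>* u v" by blast+
  from this(2) show "reach_in E S u v"
  proof (induction rule: rtranclp_induct)
    case base
    show ?case using u unfolding reach_in_def by (intro exI[of _ "[u]"]) (simp add: is_walk_def)
  next
    case (step b c)
    then obtain xs where xs: "is_walk E xs" "set xs \<subseteq> S" "hd xs = u" "last xs = b"
      unfolding reach_in_def by blast
    then have "xs \<noteq> []" by (simp add: is_walk_def)
    with xs step have "is_walk E (xs @ [c]) \<and> set (xs @ [c]) \<subseteq> S \<and> hd (xs @ [c]) = u
        \<and> last (xs @ [c]) = c"
      by (simp add: is_walk_snoc)
    then show ?case unfolding reach_in_def by blast
  qed
qed

definition walk_of_length :: "'a set \<Rightarrow> ('a \<Rightarrow> 'a \<Rightarrow> bool) \<Rightarrow> 'a \<Rightarrow> nat \<Rightarrow> 'a \<Rightarrow> bool" where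
  "walk_of_length V E u n v \<longleftrightarrow>
     (\<exists>xs. is_walk E xs \<and> set xs \<subseteq> V \<and> hd xs = u \<and> last xs = v \<and> length xs = Suc n)"

lemma gdist_eq_Least: "gdist V E u v = (LEAST n. walk_of_length V E u n v)"
  by (simp add: gdist_def walk_of_length_def)

lemma walk_of_length_0: "walk_of_length V E u 0 v \<longleftrightarrow> u \<in> V \<and> v = u"
proof
  assume "walk_of_length V E u 0 v"
  then obtain x where "is_walk E [x]" "set [x] \<subseteq> V" "hd [x] = u" "last [x] = v"
    unfolding walk_of_length_def by (auto simp: length_Suc_conv)
  then show "u \<in> V \<and> v = u" by simp
qed (auto simp: walk_of_length_def is_walk_def intro!: exI[of _ "[u]"])

lemma walk_of_length_Suc:
  "walk_of_length V E u (Suc n) v \<longleftrightarrow> (\<exists>w. walk_of_length V E u n w \<and> E w v \<and> v \<in> V)"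
proof
  assume "walk_of_length V E u (Suc n) v"
  then obtain xs where xs: "is_walk E xs" "set xs \<subseteq> V" "hd xs = u" "last xs = v"
      "length xs = Suc (Suc n)"
    unfolding walk_of_length_def by blast
  then obtain ys where ys: "xs = ys @ [v]" "ys \<noteq> []"
    by (cases xs rule: rev_cases) fastforce+
  with xs have "walk_of_length V E u n (last ys) \<and> E (last ys) v \<and> v \<in> V"
    unfolding walk_of_length_def by (auto simp: is_walk_snoc)
  then show "\<exists>w. walk_of_length V E u n w \<and> E w v \<and> v \<in> V" by blast
next
  assume "\<exists>w. walk_of_length V E u n w \<and> E w v \<and> v \<in> V"
  then obtain w xs where xs: "is_walk E xs" "set xs \<subseteq> V" "hd xs = u" "last xs = w"
      "length xs = Suc n" and "E w v" "v \<in> V"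
    unfolding walk_of_length_def by blast
  moreover have "xs \<noteq> []" using xs(1) by (simp add: is_walk_def)
  ultimately show "walk_of_length V E u (Suc n) v" unfolding walk_of_length_def
    by (intro exI[of _ "xs @ [v]"]) (simp add: is_walk_snoc)
qed

lemma walk_of_length_imp_mem: "walk_of_length V E u n v \<Longrightarrow> v \<in> V"
  unfolding walk_of_length_def is_walk_def by (metis last_in_set subsetD)

lemma walk_of_length_imp_reach_in: "walk_of_length V E u n v \<Longrightarrow> reach_in E V u v"
  unfolding walk_of_length_def reach_in_def by blast

lemma reach_in_imp_walk_of_length_gdist:
  "reach_in E V u v \<Longrightarrow> walk_of_length V E u (gdist V E u v) v"
  unfolding gdist_eq_Least
proof (rule LeastI_ex)
  assume "reach_in E V u v"
  then obtain xs where "is_walk E xs" "set xs \<subseteq> V" "hd xs = u" "last xs = v"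
    unfolding reach_in_def by blast
  moreover then have "length xs = Suc (length xs - 1)" by (simp add: is_walk_def)
  ultimately show "\<exists>n. walk_of_length V E u n v" unfolding walk_of_length_def by blast
qed

lemma gdist_le: "walk_of_length V E u n v \<Longrightarrow> gdist V E u v \<le> n"
  unfolding gdist_eq_Least by (rule Least_le)

lemma gdist_edge_le:
  assumes "reach_in E V u x" "E x y" "y \<in> V"
  shows "gdist V E u y \<le> gdist V E u x + 1"
  using assms by (intro gdist_le) (auto simp: walk_of_length_Suc dest: reach_in_imp_walk_of_length_gdist)

lemma gdist_Suc_imp_pred:
  assumes "reach_in E V u x" "gdist V E u x = Suc k"
  shows "\<exists>w. w \<in> V \<and> E w x \<and> gdist V E u w = k"
proof -
  obtain w where w: "walk_of_length V E u k w" "E w x" "x \<in> V"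
    using reach_in_imp_walk_of_length_gdist[OF assms(1)] assms(2) by (auto simp: walk_of_length_Suc)
  have "gdist V E u w \<le> k" using w(1) by (rule gdist_le)
  moreover have "gdist V E u x \<le> gdist V E u w + 1"
    using walk_of_length_imp_reach_in[OF w(1)] w(2,3) by (rule gdist_edge_le)
  moreover have "w \<in> V" using w(1) by (rule walk_of_length_imp_mem)
  ultimately show ?thesis using w assms(2) by auto
qed

lemma closed_walk_step:
  assumes "is_walk E xs" "E (last xs) (hd xs)" "j < length xs"
  shows "E (xs ! j) (xs ! (Suc j mod length xs))"
proof (cases "Suc j < length xs")
  case True
  then show ?thesis using assms(1) by (simp add: is_walk_def)
next
  case False
  then have "Suc j = length xs" using assms(3) by simp
  then have "j = length xs - 1" "Suc j mod length xs = 0" by auto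
  moreover have "xs \<noteq> []" using assms(3) by auto
  ultimately show ?thesis using assms(2) by (simp add: last_conv_nth hd_conv_nth)
qed

lemma ex_nth_maximal:
  fixes f :: "'b \<Rightarrow> 'c::linorder"
  assumes "xs \<noteq> []"
  shows "\<exists>i < length xs. \<forall>j < length xs. f (xs ! j) \<le> f (xs ! i)"
proof -
  have "f ` set xs \<noteq> {}" using assms by simp
  then obtain c where c: "c \<in> set xs" "f c = Max (f ` set xs)"
    using Max_in[of "f ` set xs"] by (metis finite_set finite_imageI imageE)
  then obtain i where "i < length xs" "xs ! i = c" by (auto simp: in_set_conv_nth)
  with c show ?thesis by (metis Max_ge finite_set finite_imageI image_eqI nth_mem)
qed

lemma not_has_cycle_if_unique_lower_neighbour:
  fixes f :: "'b \<Rightarrow> 'c::linorder"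
  assumes sym: "\<And>x y. E x y \<Longrightarrow> E y x"
    and neq: "\<And>x y. x \<in> V \<Longrightarrow> y \<in> V \<Longrightarrow> E x y \<Longrightarrow> f x \<noteq> f y"
    and unique: "\<And>x y z. x \<in> V \<Longrightarrow> y \<in> V \<Longrightarrow> z \<in> V \<Longrightarrow> E x y \<Longrightarrow> E x z \<Longrightarrow>
      f y < f x \<Longrightarrow> f z < f x \<Longrightarrow> y = z"
  shows "\<not> has_cycle V E"
proof
  assume "has_cycle V E"
  then obtain xs where xs: "length xs \<ge> 3" "distinct xs" "set xs \<subseteq> V" "is_walk E xs"
    "E (last xs) (hd xs)" unfolding has_cycle_def by blast
  define n where "n = length xs"
  have step: "E (xs ! j) (xs ! ((j + 1) mod n))" if "j < n" for j
    using closed_walk_step[OF xs(4,5)] that n_def by simp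
  have in_V: "xs ! j \<in> V" if "j < n" for j
    using that xs(3) n_def nth_mem by blast
  obtain i where i: "i < n" and top: "\<And>j. j < n \<Longrightarrow> f (xs ! j) \<le> f (xs ! i)"
  proof -
    have "xs \<noteq> []" using xs(1) by auto
    then show thesis using ex_nth_maximal[of xs f] that n_def by blast
  qed
  define p where "p = (if i = 0 then n - 1 else i - 1)"
  have n3: "3 \<le> n" using xs(1) n_def by simp
  have p: "p < n" "(p + 1) mod n = i"
    using i n3 unfolding p_def by auto
  have lower: "f (xs ! j) < f (xs ! i)" if "j < n" "E (xs ! i) (xs ! j)" for j
    using neq[OF in_V[OF i] in_V[OF that(1)] that(2)] top[OF that(1)] by simp
  have succ: "(i + 1) mod n < n" using n3 by simp
  have "xs ! ((i + 1) mod n) = xs ! p"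
  proof (rule unique)
    show "xs ! i \<in> V" "xs ! ((i + 1) mod n) \<in> V" "xs ! p \<in> V"
      using in_V i p succ by auto
    show "E (xs ! i) (xs ! ((i + 1) mod n))" "E (xs ! i) (xs ! p)"
      using step[OF i] step[OF p(1)] sym p(2) by auto
    then show "f (xs ! ((i + 1) mod n)) < f (xs ! i)" "f (xs ! p) < f (xs ! i)"
      using lower succ p(1) by auto
  qed
  moreover have "(i + 1) mod n \<noteq> p"
    using i n3 unfolding p_def by (cases "i + 1 = n") auto
  ultimately show False
    using xs(2) succ p(1) n_def by (simp add: nth_eq_iff_index_eq)
qed

locale rooted_graph =
  fixes V :: "'a set" and E :: "'a \<Rightarrow> 'a \<Rightarrow> bool" and v0 :: 'a
  assumes simple: "simple_graph V E"
    and connected: "connected_graph V E"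
    and root: "v0 \<in> V"
begin

abbreviation depth :: "'a \<Rightarrow> nat" where
  "depth \<equiv> gdist V E v0"

lemma edge_in_V: "E x y \<Longrightarrow> x \<in> V \<and> y \<in> V"
  using simple by (simp add: simple_graph_def)

lemma edge_sym: "E x y \<Longrightarrow> E y x"
  using simple by (simp add: simple_graph_def)

lemma reach_in_root: "x \<in> V \<Longrightarrow> reach_in E V v0 x"
  using connected root by (simp add: connected_graph_def connected_on_def)

lemma depth_eq_0_imp_root: "x \<in> V \<Longrightarrow> depth x = 0 \<Longrightarrow> x = v0"
  using reach_in_imp_walk_of_length_gdist[OF reach_in_root] by (fastforce simp: walk_of_length_0)

lemma depth_edge_le: "E x y \<Longrightarrow> depth y \<le> depth x + 1"
  using gdist_edge_le[OF reach_in_root] edge_in_V by blast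

lemma pred_set_iff: "u \<in> pred_set V E v0 x \<longleftrightarrow> E u x \<and> depth u + 1 = depth x"
  using edge_in_V by (auto simp: pred_set_def)

definition cluster :: "'a \<Rightarrow> 'a set" where
  "cluster x = {w \<in> sphere V E v0 (depth x). reach_in E (sphere V E v0 (depth x)) x w}"

lemma clusters_eq_image_cluster: "clusters V E v0 = cluster ` V"
  unfolding clusters_def components_of_def cluster_def sphere_def by auto

lemma mem_cluster_iff:
  "x \<in> V \<Longrightarrow> w \<in> cluster x \<longleftrightarrow> (induced E (sphere V E v0 (depth x)))\<^sup>*\<^sup>* x w"
  unfolding cluster_def reach_in_iff_rtranclp
  by (auto simp: sphere_def elim: rtranclp.cases dest: rtranclp.cases)

lemma mem_clusterD: "w \<in> cluster x \<Longrightarrow> w \<in> V \<and> depth w = depth x"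
  by (simp add: cluster_def sphere_def)

lemma mem_cluster_self: "x \<in> V \<Longrightarrow> x \<in> cluster x"
  by (simp add: mem_cluster_iff)

lemma cluster_eq_if_mem:
  assumes "x \<in> V" "w \<in> cluster x"
  shows "cluster w = cluster x"
proof -
  let ?R = "induced E (sphere V E v0 (depth x))"
  have w: "w \<in> V" "depth w = depth x" using mem_clusterD[OF assms(2)] by auto
  have "?R\<^sup>*\<^sup>* x w" using assms by (simp add: mem_cluster_iff)
  moreover have "symp ?R" by (auto intro: sympI edge_sym)
  ultimately have "?R\<^sup>*\<^sup>* w x" by (blast dest: sympD[OF symp_rtranclp])
  then show ?thesis
    using \<open>?R\<^sup>*\<^sup>* x w\<close> assms(1) w by (auto simp: mem_cluster_iff intro: rtranclp_trans)
qed

lemma cluster_eq_if_edge: "E x y \<Longrightarrow> depth x = depth y \<Longrightarrow> cluster x = cluster y"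
  using cluster_eq_if_mem[of x y] edge_in_V by (auto simp: mem_cluster_iff sphere_def)

text \<open>Only meaningful on clusters, where all vertices have the same depth.\<close>

definition cluster_depth :: "'a set \<Rightarrow> nat" where
  "cluster_depth C = depth (SOME x. x \<in> C)"

lemma cluster_depth_cluster: "x \<in> V \<Longrightarrow> cluster_depth (cluster x) = depth x"
  unfolding cluster_depth_def using mem_clusterD someI[of "\<lambda>y. y \<in> cluster x" x] mem_cluster_self
  by blast

lemma cluster_adjE:
  assumes "cluster_adj E C C'" "C \<in> cluster ` V" "C' \<in> cluster ` V"
  obtains x y where "E x y" "C = cluster x" "C' = cluster y"
  using assms cluster_eq_if_mem unfolding cluster_adj_def by blast

lemma cluster_adj_depth:
  assumes "cluster_adj E C C'" "C \<in> cluster ` V" "C' \<in> cluster ` V"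
  shows "cluster_depth C' = cluster_depth C + 1 \<or> cluster_depth C = cluster_depth C' + 1"
proof -
  obtain x y where xy: "E x y" "C = cluster x" "C' = cluster y"
    using assms by (rule cluster_adjE)
  have "depth x \<noteq> depth y" using cluster_eq_if_edge xy assms(1) by (auto simp: cluster_adj_def)
  moreover have "depth y \<le> depth x + 1" "depth x \<le> depth y + 1"
    using depth_edge_le xy(1) edge_sym by auto
  ultimately show ?thesis using xy edge_in_V by (auto simp: cluster_depth_cluster)
qed

lemma cluster_adj_sym: "cluster_adj E C C' \<Longrightarrow> cluster_adj E C' C"
  unfolding cluster_adj_def using edge_sym by blast

lemma connected_cluster_graph: "connected_graph (cluster ` V) (cluster_adj E)"
proof -
  let ?R = "induced (cluster_adj E) (cluster ` V)"
  have to_root: "?R\<^sup>*\<^sup>* (cluster x) (cluster v0)" if "x \<in> V" for x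
    using that
  proof (induction "depth x" arbitrary: x)
    case 0
    then show ?case using depth_eq_0_imp_root by fastforce
  next
    case (Suc k)
    obtain u where u: "E u x" "depth u = k"
      using gdist_Suc_imp_pred[OF reach_in_root[OF Suc.prems] Suc(2)[symmetric]] by blast
    then have "cluster x \<noteq> cluster u"
      using Suc(2) cluster_depth_cluster edge_in_V by (metis n_not_Suc_n)
    moreover have "x \<in> cluster x" "u \<in> cluster u" "u \<in> V"
      using Suc.prems u(1) edge_in_V mem_cluster_self by auto
    ultimately have "?R (cluster x) (cluster u)"
      using Suc.prems edge_sym[OF u(1)] unfolding cluster_adj_def by blast
    moreover have "?R\<^sup>*\<^sup>* (cluster u) (cluster v0)" using Suc.hyps(1) u edge_in_V by blast
    ultimately show ?case by (rule converse_rtranclp_into_rtranclp)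
  qed
  have "symp ?R" by (auto intro: sympI cluster_adj_sym)
  then have "?R\<^sup>*\<^sup>* C C'" if "C \<in> cluster ` V" "C' \<in> cluster ` V" for C C'
    using that to_root by (blast dest: sympD[OF symp_rtranclp] intro: rtranclp_trans)
  then show ?thesis
    using root unfolding connected_graph_def connected_on_def reach_in_iff_rtranclp by blast
qed

end

locale weetman_rooted_graph = rooted_graph +
  assumes triangle: "triangle_condition V E v0"
    and interval: "interval_condition V E v0"
begin

lemma pred_set_same_cluster:
  assumes "u \<in> pred_set V E v0 x" "u' \<in> pred_set V E v0 x"
  shows "cluster u = cluster u'"
proof -
  let ?P = "pred_set V E v0 x"
  have "x \<in> V" "u \<in> V" using assms(1) edge_in_V by (auto simp: pred_set_iff)
  then have "(induced E ?P)\<^sup>*\<^sup>* u u'"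
    using interval assms by (simp add: interval_condition_def connected_on_def reach_in_iff_rtranclp)
  moreover have "induced E ?P \<le> induced E (sphere V E v0 (depth u))"
    using assms(1) edge_in_V by (auto simp: pred_set_iff sphere_def)
  ultimately have "u' \<in> cluster u"
    using \<open>u \<in> V\<close> rtranclp_mono by (auto simp: mem_cluster_iff)
  then show ?thesis using cluster_eq_if_mem \<open>u \<in> V\<close> by metis
qed

lemma preds_same_cluster_along_sphere:
  assumes "(induced E (sphere V E v0 k))\<^sup>*\<^sup>* x y"
    and "u \<in> pred_set V E v0 x" "u' \<in> pred_set V E v0 y"
  shows "cluster u = cluster u'"
  using assms(1,3)
proof (induction arbitrary: u' rule: rtranclp_induct)
  case base
  show ?case by (rule pred_set_same_cluster[OF assms(2) base])
next
  case (step y z)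
  then have "E y z" "y \<in> V" "z \<in> V" "depth y = depth z" by (auto simp: sphere_def)
  then obtain w where w: "w \<in> pred_set V E v0 y" "w \<in> pred_set V E v0 z"
    using triangle by (force simp: triangle_condition_def pred_set_iff)
  have "cluster u = cluster w" using step.IH[OF w(1)] .
  also have "\<dots> = cluster u'" using pred_set_same_cluster[OF w(2) step.prems] .
  finally show ?case .
qed

lemma cluster_parent_unique:
  assumes "C \<in> cluster ` V" "C1 \<in> cluster ` V" "C2 \<in> cluster ` V"
    and "cluster_adj E C C1" "cluster_adj E C C2"
    and "cluster_depth C1 + 1 = cluster_depth C" "cluster_depth C2 + 1 = cluster_depth C"
  shows "C1 = C2"
proof -
  obtain x u where xu: "E x u" "C = cluster x" "C1 = cluster u"
    using assms(4,1,2) by (rule cluster_adjE)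
  obtain y w where yw: "E y w" "C = cluster y" "C2 = cluster w"
    using assms(5,1,3) by (rule cluster_adjE)
  have V: "x \<in> V" "u \<in> V" "y \<in> V" "w \<in> V" using xu(1) yw(1) edge_in_V by auto
  have "y \<in> cluster x" using mem_cluster_self[OF V(3)] xu(2) yw(2) by simp
  then have "(induced E (sphere V E v0 (depth x)))\<^sup>*\<^sup>* x y" "depth y = depth x"
    using mem_cluster_iff[OF V(1)] mem_clusterD by auto
  moreover have "depth u + 1 = depth x" "depth w + 1 = depth y"
    using assms(6,7) xu(2,3) yw(2,3) V \<open>depth y = depth x\<close> by (simp_all add: cluster_depth_cluster)
  then have "u \<in> pred_set V E v0 x" "w \<in> pred_set V E v0 y"
    using edge_sym[OF xu(1)] edge_sym[OF yw(1)] by (simp_all add: pred_set_iff)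
  ultimately show ?thesis
    using preds_same_cluster_along_sphere xu(3) yw(3) by blast
qed

lemma acyclic_cluster_graph: "\<not> has_cycle (cluster ` V) (cluster_adj E)"
proof (rule not_has_cycle_if_unique_lower_neighbour[where f = cluster_depth])
  fix C C1 C2
  assume C: "C \<in> cluster ` V" "C1 \<in> cluster ` V" "C2 \<in> cluster ` V"
    and adj: "cluster_adj E C C1" "cluster_adj E C C2"
    and "cluster_depth C1 < cluster_depth C" "cluster_depth C2 < cluster_depth C"
  then have "cluster_depth C1 + 1 = cluster_depth C" "cluster_depth C2 + 1 = cluster_depth C"
    using cluster_adj_depth[OF adj(1) C(1,2)] cluster_adj_depth[OF adj(2) C(1,3)] by auto
  then show "C1 = C2" using cluster_parent_unique C adj by blast
next
  fix C C'
  assume "C \<in> cluster ` V" "C' \<in> cluster ` V" "cluster_adj E C C'"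
  then show "cluster_depth C \<noteq> cluster_depth C'" using cluster_adj_depth by fastforce
qed (rule cluster_adj_sym)

end

theorem mainTheorem4:
  fixes V :: "'a set" and E :: "'a \<Rightarrow> 'a \<Rightarrow> bool" and v0 :: 'a
  assumes "finite V"
    and "simple_graph V E"
    and "connected_graph V E"
    and "weetman V E"
    and "v0 \<in> V"
  shows "is_tree (clusters V E v0) (cluster_adj E)"
proof -
  interpret weetman_rooted_graph V E v0
    using assms by unfold_locales (auto simp: weetman_def)
  show ?thesis
    unfolding is_tree_def clusters_eq_image_cluster
    using connected_cluster_graph acyclic_cluster_graph by simp
qed

end
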